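(* Let $z_1,z_2,\dots$ be a stationary finite-state Markov chain with stationary distribution $\mu$, and for $w\in\mathcal{K}$ and $N\in\mathbb{N}$ let $g^N(w)=\frac1N\sum_{i=1}^N\nabla f(w;z_i)$. Suppose $\|\nabla f(w;z)\|\le G$ for all $w\in\mathcal{K}$, $z\in\Omega$. Let $K\in\{1,\dots,N\}$ and $n=\lfloor N/K\rfloor$. Then for every $\delta>K(n-1)d_{\mathrm{mix}}(K)$ and every fixed $w\in\mathcal{K}$ (not depending on the chain), with probability at least $1-\delta$, \[ \|g^N(w)-\nabla F(w)\|\le\frac{6G}{\sqrt n}\Big(1+\sqrt{\log(K/\delta')}\Big)+\frac{2GK}{N}, \] where $\delta'=\delta-K(n-1)d_{\mathrm{mix}}(K)$.
   Context: $\Omega$ is the finite state space; $\mathcal{K}\subseteq\mathbb{R}^d$; $f(\cdot;z)$ is differentiable for each $z\in\Omega$ and $F(w)=\mathbb{E}_{z\sim\mu}[f(w;z)]$. For probability measures $P,Q$ on $\Omega$, $\|P-Q\|_{TV}=\sup_A|P(A)-Q(A)|$; $P^s(z,\cdot)$ denotes the law of $z_{s+1}$ given $z_1=z$, and $d_{\mathrm{mix}}(s)=\sup_{z\in\Omega}\|P^s(z,\cdot)-\mu\|_{TV}$. $\log$ is the natural logarithm. *)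

theory Defs
  imports "HOL-Analysis.Analysis"
begin

definition stochastic_kernel :: "('z::finite \<Rightarrow> 'z \<Rightarrow> real) \<Rightarrow> bool" where
  "stochastic_kernel P \<longleftrightarrow> (\<forall>z z'. P z z' \<ge> 0) \<and> (\<forall>z. (\<Sum>z'\<in>UNIV. P z z') = 1)"

definition distribution :: "('z::finite \<Rightarrow> real) \<Rightarrow> bool" where
  "distribution p \<longleftrightarrow> (\<forall>z. p z \<ge> 0) \<and> (\<Sum>z\<in>UNIV. p z) = 1"

definition stationary :: "('z::finite \<Rightarrow> 'z \<Rightarrow> real) \<Rightarrow> ('z \<Rightarrow> real) \<Rightarrow> bool" where
  "stationary P mu \<longleftrightarrow> (\<forall>z'. (\<Sum>z\<in>UNIV. mu z * P z z') = mu z')"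

fun kpow :: "('z::finite \<Rightarrow> 'z \<Rightarrow> real) \<Rightarrow> nat \<Rightarrow> 'z \<Rightarrow> 'z \<Rightarrow> real" where
  "kpow P 0 z z' = (if z = z' then 1 else 0)"
| "kpow P (Suc s) z z' = (\<Sum>y\<in>UNIV. kpow P s z y * P y z')"

definition tv_dist :: "('z::finite \<Rightarrow> real) \<Rightarrow> ('z \<Rightarrow> real) \<Rightarrow> real" where
  "tv_dist p q = Max ((\<lambda>A. \<bar>(\<Sum>x\<in>A. p x) - (\<Sum>x\<in>A. q x)\<bar>) ` UNIV)"

definition d_mix :: "('z::finite \<Rightarrow> 'z \<Rightarrow> real) \<Rightarrow> ('z \<Rightarrow> real) \<Rightarrow> nat \<Rightarrow> real" where
  "d_mix P mu s = Max ((\<lambda>z. tv_dist (kpow P s z) mu) ` UNIV)"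

text \<open>Probability that the path (z_1,...,z_N) of the Markov chain with initial law mu
  and kernel P lies in the event E (a predicate on paths indexed by 1..N).\<close>
definition path_prob ::
  "('z::finite \<Rightarrow> real) \<Rightarrow> ('z \<Rightarrow> 'z \<Rightarrow> real) \<Rightarrow> nat \<Rightarrow> ((nat \<Rightarrow> 'z) \<Rightarrow> bool) \<Rightarrow> real" where
  "path_prob mu P N E =
     (\<Sum>x\<in>PiE {1..N} (\<lambda>_. UNIV).
        if E x then mu (x 1) * (\<Prod>i\<in>{1..<N}. P (x i) (x (Suc i))) else 0)"

end

theory Submission
  imports Defs "HOL-Probability.Hoeffding"
begin

(* Group the N samples into the K interleaved subsequences z_(k+1), z_(k+1+K), z_(k+1+2K), ...
   of length n = N div K; the fewer than K samples left over move the average by at most 2GK/N.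
   Consecutive members of a subsequence are K steps apart, so by stationarity each subsequence is
   a Markov chain with kernel P^K started in mu, and replacing its n - 1 transitions one at a time
   by fresh draws from mu changes the probability of any event by at most d_mix(K) each.  For n
   independent centred vectors of norm at most 2G, the norm of their sum has mean at most
   2G sqrt n by the second moment, and exceeds that mean by t with probability at most
   exp (-t^2 / (8 G^2 n)) by Hoeffding's lemma applied to the martingale of conditional means.
   A union bound over the K subsequences gives the failure probability
   K (delta'/K + (n - 1) d_mix(K)) = delta. *)

section \<open>Expectations along a Markov chain\<close>

text \<open>\<open>markov_exp P m h z\<close> is the expectation of \<open>h [z\<^sub>2, \<dots>, z\<^sub>m\<^sub>+\<^sub>1]\<close>
  for the chain started in \<open>z\<^sub>1 = z\<close>; the start state is not part of the list.\<close>

fun markov_exp :: "('z::finite \<Rightarrow> 'z \<Rightarrow> real) \<Rightarrow> nat \<Rightarrow> ('z list \<Rightarrow> real) \<Rightarrow> 'z \<Rightarrow> real" where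
  "markov_exp P 0 h z = h []"
| "markov_exp P (Suc m) h z = (\<Sum>y\<in>UNIV. P z y * markov_exp P m (\<lambda>ys. h (y # ys)) y)"

lemma markov_exp_cong:
  "(\<And>ys. length ys = m \<Longrightarrow> h ys = h' ys) \<Longrightarrow> markov_exp P m h z = markov_exp P m h' z"
proof (induction m arbitrary: h h' z)
  case (Suc m)
  have "markov_exp P m (\<lambda>ys. h (y # ys)) y = markov_exp P m (\<lambda>ys. h' (y # ys)) y" for y
    by (rule Suc.IH) (simp add: Suc.prems)
  then show ?case
    by simp
qed simp

lemma markov_exp_const:
  assumes "stochastic_kernel P"
  shows "markov_exp P m (\<lambda>_. c) z = c"
  using assms by (induction m arbitrary: z) (simp_all add: stochastic_kernel_def flip: sum_distrib_right)

lemma markov_exp_append: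
  "markov_exp P (a + b) h z
     = markov_exp P a (\<lambda>ys. markov_exp P b (\<lambda>zs. h (ys @ zs)) (last (z # ys))) z"
  by (induction a arbitrary: h z) simp_all

lemma kpow_Suc_left: "kpow P (Suc a) z u = (\<Sum>y\<in>UNIV. P z y * kpow P a y u)"
proof (induction a arbitrary: z u)
  case 0
  show ?case
    by (simp add: if_distrib[of "\<lambda>c. c * _"] if_distrib[of "\<lambda>c. _ * c"] cong: if_cong)
next
  case (Suc a)
  have "kpow P (Suc (Suc a)) z u = (\<Sum>y\<in>UNIV. (\<Sum>v\<in>UNIV. P z v * kpow P a v y) * P y u)"
    using Suc by simp
  also have "\<dots> = (\<Sum>v\<in>UNIV. P z v * (\<Sum>y\<in>UNIV. kpow P a v y * P y u))"
    by (simp add: sum_distrib_right sum_distrib_left mult.assoc) (rule sum.swap)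
  finally show ?case
    by simp
qed

lemma markov_exp_last:
  "markov_exp P a (\<lambda>ys. \<phi> (last (z # ys))) z = (\<Sum>u\<in>UNIV. kpow P a z u * \<phi> u)"
proof (induction a arbitrary: z)
  case 0
  show ?case
    by (simp add: if_distrib[of "\<lambda>c. c * _"] cong: if_cong)
next
  case (Suc a)
  have "markov_exp P (Suc a) (\<lambda>ys. \<phi> (last (z # ys))) z
      = (\<Sum>y\<in>UNIV. P z y * (\<Sum>u\<in>UNIV. kpow P a y u * \<phi> u))"
    using Suc by simp
  also have "\<dots> = (\<Sum>u\<in>UNIV. (\<Sum>y\<in>UNIV. P z y * kpow P a y u) * \<phi> u)"
    by (simp add: sum_distrib_right sum_distrib_left mult.assoc) (rule sum.swap)
  finally show ?case
    by (simp only: kpow_Suc_left)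
qed

lemma stochastic_kernel_kpow:
  assumes "stochastic_kernel P"
  shows "stochastic_kernel (kpow P a)"
  unfolding stochastic_kernel_def
proof (intro conjI allI)
  show "0 \<le> kpow P a z u" for z u
    using assms unfolding stochastic_kernel_def
    by (induction a arbitrary: u) (auto intro!: sum_nonneg)
  show "(\<Sum>u\<in>UNIV. kpow P a z u) = 1" for z
  proof (induction a)
    case (Suc a)
    have "(\<Sum>u\<in>UNIV. kpow P (Suc a) z u) = (\<Sum>y\<in>UNIV. kpow P a z y * (\<Sum>u\<in>UNIV. P y u))"
      by (simp add: sum_distrib_left) (rule sum.swap)
    also have "\<dots> = 1"
      using assms Suc unfolding stochastic_kernel_def by simp
    finally show ?case .
  qed simp
qed

lemma stationary_kpow:
  assumes "stationary P mu"
  shows "stationary (kpow P a) mu"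
  unfolding stationary_def
proof
  show "(\<Sum>z\<in>UNIV. mu z * kpow P a z u) = mu u" for u
  proof (induction a arbitrary: u)
    case 0
    then show ?case
      by (simp add: if_distrib cong: if_cong)
  next
    case (Suc a)
    have "(\<Sum>z\<in>UNIV. mu z * kpow P (Suc a) z u)
        = (\<Sum>y\<in>UNIV. (\<Sum>z\<in>UNIV. mu z * kpow P a z y) * P y u)"
      by (simp add: sum_distrib_right sum_distrib_left mult.assoc) (rule sum.swap)
    also have "\<dots> = mu u"
      using Suc assms unfolding stationary_def by simp
    finally show ?case .
  qed
qed

lemma markov_exp_stationary_Suc:
  assumes "stationary P mu"
  shows "(\<Sum>z\<in>UNIV. mu z * markov_exp P (Suc m) h z)
       = (\<Sum>z\<in>UNIV. mu z * markov_exp P m (\<lambda>ys. h (z # ys)) z)"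
proof -
  have "(\<Sum>z\<in>UNIV. mu z * markov_exp P (Suc m) h z)
      = (\<Sum>y\<in>UNIV. (\<Sum>z\<in>UNIV. mu z * P z y) * markov_exp P m (\<lambda>ys. h (y # ys)) y)"
    by (simp add: sum_distrib_left sum_distrib_right mult.assoc) (rule sum.swap)
  then show ?thesis
    using assms unfolding stationary_def by simp
qed

lemma markov_exp_stationary_drop:
  assumes "stationary P mu"
  shows "(\<Sum>z\<in>UNIV. mu z * markov_exp P (a + m) (\<lambda>ys. h (drop a ys)) z)
       = (\<Sum>z\<in>UNIV. mu z * markov_exp P m h z)"
proof -
  have "markov_exp P (a + m) (\<lambda>ys. h (drop a ys)) z = (\<Sum>u\<in>UNIV. kpow P a z u * markov_exp P m h u)"
    for z
    unfolding markov_exp_append markov_exp_last[symmetric] by (rule markov_exp_cong) simp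
  then have "(\<Sum>z\<in>UNIV. mu z * markov_exp P (a + m) (\<lambda>ys. h (drop a ys)) z)
      = (\<Sum>u\<in>UNIV. (\<Sum>z\<in>UNIV. mu z * kpow P a z u) * markov_exp P m h u)"
    by (simp add: sum_distrib_right sum_distrib_left mult.assoc) (rule sum.swap)
  then show ?thesis
    using stationary_kpow[OF assms] unfolding stationary_def by simp
qed

fun subsample :: "nat \<Rightarrow> nat \<Rightarrow> 'a list \<Rightarrow> 'a list" where
  "subsample K 0 ys = []"
| "subsample K (Suc n) ys = ys ! (K - 1) # subsample K n (drop K ys)"

lemma length_subsample [simp]: "length (subsample K n ys) = n"
  by (induction n arbitrary: ys) simp_all

lemma nth_subsample:
  assumes "1 \<le> K" "n * K \<le> length ys" "j < n"
  shows "subsample K n ys ! j = ys ! (K - 1 + j * K)"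
  using assms
proof (induction n arbitrary: ys j)
  case (Suc n)
  show ?case
  proof (cases j)
    case (Suc i)
    then have "subsample K n (drop K ys) ! i = drop K ys ! (K - 1 + i * K)"
      using Suc.prems by (intro Suc.IH) auto
    then show ?thesis
      using Suc Suc.prems by (simp add: algebra_simps)
  qed simp
qed simp

lemma markov_exp_subsample:
  assumes kernel: "stochastic_kernel P" and K: "1 \<le> K" and m: "n * K \<le> m"
  shows "markov_exp P m (\<lambda>ys. g (subsample K n ys)) z = markov_exp (kpow P K) n g z"
  using m
proof (induction n arbitrary: g m z)
  case 0
  then show ?case
    using markov_exp_const[OF kernel] by simp
next
  case (Suc n)
  define \<phi> where "\<phi> u = markov_exp (kpow P K) n (\<lambda>us. g (u # us)) u" for u
  have m: "m = K + (m - K)" and IH_len: "n * K \<le> m - K"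
    using Suc.prems by simp_all
  have "markov_exp P (m - K) (\<lambda>zs. g (subsample K (Suc n) (ys @ zs))) (last (z # ys))
      = \<phi> (last (z # ys))" if "length ys = K" for ys
  proof -
    have ne: "ys \<noteq> []"
      using that K by auto
    have "subsample K (Suc n) (ys @ zs) = last ys # subsample K n zs" for zs
      using that ne K by (simp add: nth_append last_conv_nth)
    then have "markov_exp P (m - K) (\<lambda>zs. g (subsample K (Suc n) (ys @ zs))) (last ys)
        = markov_exp P (m - K) (\<lambda>zs. g (last ys # subsample K n zs)) (last ys)"
      by simp
    also have "\<dots> = \<phi> (last ys)"
      unfolding \<phi>_def by (rule Suc.IH[OF IH_len])
    finally show ?thesis
      using ne by simp
  qed
  then have "markov_exp P m (\<lambda>ys. g (subsample K (Suc n) ys)) z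
      = markov_exp P K (\<lambda>ys. \<phi> (last (z # ys))) z"
    by (subst m, subst markov_exp_append) (rule markov_exp_cong)
  also have "\<dots> = (\<Sum>u\<in>UNIV. kpow P K z u * \<phi> u)"
    by (rule markov_exp_last)
  finally show ?case
    by (simp only: markov_exp.simps(2) \<phi>_def)
qed

section \<open>Independent draws and total variation\<close>

fun iid_exp :: "('z::finite \<Rightarrow> real) \<Rightarrow> nat \<Rightarrow> ('z list \<Rightarrow> real) \<Rightarrow> real" where
  "iid_exp mu 0 g = g []"
| "iid_exp mu (Suc n) g = (\<Sum>z\<in>UNIV. mu z * iid_exp mu n (\<lambda>us. g (z # us)))"

lemma iid_exp_add: "iid_exp mu n (\<lambda>us. f us + g us) = iid_exp mu n f + iid_exp mu n g"
  by (induction n arbitrary: f g) (simp_all add: distrib_left sum.distrib)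

lemma iid_exp_scale: "iid_exp mu n (\<lambda>us. a * f us) = a * iid_exp mu n f"
  by (induction n arbitrary: f) (simp_all add: mult.left_commute sum_distrib_left)

lemma iid_exp_const:
  assumes "distribution mu"
  shows "iid_exp mu n (\<lambda>_. c) = c"
  using assms by (induction n) (simp_all add: distribution_def flip: sum_distrib_right)

lemma iid_exp_mono:
  assumes "distribution mu" and "\<And>us. length us = n \<Longrightarrow> f us \<le> g us"
  shows "iid_exp mu n f \<le> iid_exp mu n g"
  using assms(2)
proof (induction n arbitrary: f g)
  case (Suc n)
  have "mu z * iid_exp mu n (\<lambda>us. f (z # us)) \<le> mu z * iid_exp mu n (\<lambda>us. g (z # us))" for z
  proof (rule mult_left_mono)
    show "iid_exp mu n (\<lambda>us. f (z # us)) \<le> iid_exp mu n (\<lambda>us. g (z # us))"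
      by (rule Suc.IH) (simp add: Suc.prems)
    show "0 \<le> mu z"
      using assms(1) unfolding distribution_def by simp
  qed
  then show ?case
    by (simp add: sum_mono)
qed simp

lemma iid_exp_bounds:
  assumes "distribution mu" and "\<And>us. 0 \<le> g us \<and> g us \<le> 1"
  shows "0 \<le> iid_exp mu n g \<and> iid_exp mu n g \<le> 1"
  using iid_exp_mono[OF assms(1), of n "\<lambda>_. 0" g] iid_exp_mono[OF assms(1), of n g "\<lambda>_. 1"] assms
  by (simp add: iid_exp_const)

lemma tv_dist_nonneg: "0 \<le> tv_dist p q"
  unfolding tv_dist_def by (rule order_trans[OF _ Max_ge[OF _ rangeI[where x = "{}"]]]) auto

lemma tv_dist_le_d_mix: "tv_dist (kpow P s z) mu \<le> d_mix P mu s"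
  unfolding d_mix_def by (rule Max_ge) auto

lemma d_mix_nonneg: "0 \<le> d_mix P mu s"
  by (rule order_trans[OF tv_dist_nonneg tv_dist_le_d_mix])

lemma sum_diff_mult_le_tv_dist:
  fixes p q :: "'z::finite \<Rightarrow> real"
  assumes "\<And>y. 0 \<le> \<phi> y" "\<And>y. \<phi> y \<le> 1"
  shows "(\<Sum>y\<in>UNIV. (p y - q y) * \<phi> y) \<le> tv_dist p q"
proof -
  define A where "A = {y. q y < p y}"
  have "(\<Sum>y\<in>UNIV. (p y - q y) * \<phi> y) \<le> (\<Sum>y\<in>UNIV. if y \<in> A then p y - q y else 0)"
  proof (rule sum_mono)
    fix y
    show "(p y - q y) * \<phi> y \<le> (if y \<in> A then p y - q y else 0)"
    proof (cases "y \<in> A")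
      case True
      then show ?thesis
        using mult_left_le[OF assms(2), of "p y - q y"] by (simp add: A_def)
    next
      case False
      then show ?thesis
        using mult_nonpos_nonneg[OF _ assms(1), of "p y - q y"] by (simp add: A_def)
    qed
  qed
  also have "\<dots> = (\<Sum>y\<in>A. p y - q y)"
    by (simp add: sum.If_cases)
  also have "\<dots> \<le> \<bar>(\<Sum>y\<in>A. p y) - (\<Sum>y\<in>A. q y)\<bar>"
    by (simp add: sum_subtractf)
  also have "\<dots> \<le> tv_dist p q"
    unfolding tv_dist_def by (rule Max_ge) auto
  finally show ?thesis .
qed

text \<open>Hybrid argument: the i.i.d. law is reached from the chain by replacing its transitions
  by fresh \<open>mu\<close>-draws one at a time, each replacement costing at most \<open>d\<close>.\<close>

lemma markov_exp_le_iid_exp: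
  assumes kernel: "stochastic_kernel Q" and dist: "distribution mu"
    and tv: "\<And>z. tv_dist (Q z) mu \<le> d"
    and g: "\<And>us. 0 \<le> g us \<and> g us \<le> 1"
  shows "markov_exp Q n g z - iid_exp mu n g \<le> real n * d"
  using g
proof (induction n arbitrary: g z)
  case (Suc n)
  have Q: "\<And>u. 0 \<le> Q z u" "(\<Sum>u\<in>UNIV. Q z u) = 1"
    using kernel unfolding stochastic_kernel_def by auto
  define e where "e u = iid_exp mu n (\<lambda>us. g (u # us))" for u
  have e: "0 \<le> e u \<and> e u \<le> 1" for u
    unfolding e_def using Suc.prems by (intro iid_exp_bounds[OF dist]) simp
  have "markov_exp Q (Suc n) g z - iid_exp mu (Suc n) g
      = (\<Sum>u\<in>UNIV. Q z u * markov_exp Q n (\<lambda>us. g (u # us)) u - mu u * e u)"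
    by (simp add: e_def sum_subtractf)
  also have "\<dots> = (\<Sum>u\<in>UNIV. Q z u * (markov_exp Q n (\<lambda>us. g (u # us)) u - e u))
       + (\<Sum>u\<in>UNIV. (Q z u - mu u) * e u)"
    by (simp add: left_diff_distrib right_diff_distrib flip: sum.distrib)
  also have "\<dots> \<le> (\<Sum>u\<in>UNIV. Q z u * (real n * d)) + d"
  proof (rule add_mono)
    show "(\<Sum>u\<in>UNIV. Q z u * (markov_exp Q n (\<lambda>us. g (u # us)) u - e u))
        \<le> (\<Sum>u\<in>UNIV. Q z u * (real n * d))"
      unfolding e_def using Suc.prems by (intro sum_mono mult_left_mono Suc.IH Q(1)) simp
    show "(\<Sum>u\<in>UNIV. (Q z u - mu u) * e u) \<le> d"
      using sum_diff_mult_le_tv_dist[of e "Q z" mu] e tv[of z] by auto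
  qed
  also have "\<dots> = real (Suc n) * d"
    by (simp add: Q(2) distrib_right flip: sum_distrib_right)
  finally show ?case .
qed simp

lemma stationary_markov_exp_le_iid_exp:
  assumes kernel: "stochastic_kernel Q" and dist: "distribution mu" and stat: "stationary Q mu"
    and tv: "\<And>z. tv_dist (Q z) mu \<le> d" and g: "\<And>us. 0 \<le> g us \<and> g us \<le> 1"
  shows "(\<Sum>z\<in>UNIV. mu z * markov_exp Q (Suc n) g z) \<le> iid_exp mu (Suc n) g + real n * d"
proof -
  have "(\<Sum>z\<in>UNIV. mu z * markov_exp Q (Suc n) g z)
      = (\<Sum>z\<in>UNIV. mu z * markov_exp Q n (\<lambda>us. g (z # us)) z)"
    by (rule markov_exp_stationary_Suc[OF stat])
  also have "\<dots> \<le> (\<Sum>z\<in>UNIV. mu z * (iid_exp mu n (\<lambda>us. g (z # us)) + real n * d))"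
  proof (intro sum_mono mult_left_mono)
    show "markov_exp Q n (\<lambda>us. g (z # us)) z \<le> iid_exp mu n (\<lambda>us. g (z # us)) + real n * d" for z
      using markov_exp_le_iid_exp[OF kernel dist tv, of "\<lambda>us. g (z # us)" n z] g by simp
    show "0 \<le> mu z" for z
      using dist unfolding distribution_def by simp
  qed
  also have "\<dots> = iid_exp mu (Suc n) g + (\<Sum>z\<in>UNIV. mu z) * (real n * d)"
    by (simp add: distrib_left sum.distrib sum_distrib_right)
  also have "\<dots> = iid_exp mu (Suc n) g + real n * d"
    using dist unfolding distribution_def by simp
  finally show ?thesis .
qed

section \<open>Expectations over paths\<close>

definition path_exp ::
  "('z::finite \<Rightarrow> real) \<Rightarrow> ('z \<Rightarrow> 'z \<Rightarrow> real) \<Rightarrow> nat \<Rightarrow> ((nat \<Rightarrow> 'z) \<Rightarrow> real) \<Rightarrow> real" where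
  "path_exp mu P N H =
     (\<Sum>x\<in>PiE {1..N} (\<lambda>_. UNIV). mu (x 1) * (\<Prod>i\<in>{1..<N}. P (x i) (x (Suc i))) * H x)"

lemma path_prob_eq_path_exp: "path_prob mu P N E = path_exp mu P N (\<lambda>x. of_bool (E x))"
  unfolding path_prob_def path_exp_def by (rule sum.cong) auto

lemma path_exp_mono:
  assumes "stochastic_kernel P" "distribution mu" "\<And>x. H x \<le> H' x"
  shows "path_exp mu P N H \<le> path_exp mu P N H'"
  unfolding path_exp_def using assms unfolding stochastic_kernel_def distribution_def
  by (intro sum_mono mult_left_mono mult_nonneg_nonneg prod_nonneg) auto

lemma path_prob_nonneg:
  assumes "stochastic_kernel P" "distribution mu"
  shows "0 \<le> path_prob mu P N E"
  using path_exp_mono[OF assms, of "\<lambda>_. 0" "\<lambda>x. of_bool (E x)" N]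
  by (simp add: path_prob_eq_path_exp path_exp_def)

fun path_weight :: "('z \<Rightarrow> 'z \<Rightarrow> real) \<Rightarrow> 'z \<Rightarrow> 'z list \<Rightarrow> real" where
  "path_weight P z [] = 1"
| "path_weight P z (y # ys) = P z y * path_weight P y ys"

lemma path_weight_eq_prod:
  "path_weight P z ys = (\<Prod>i<length ys. P ((z # ys) ! i) ((z # ys) ! Suc i))"
proof (induction ys arbitrary: z)
  case (Cons y ys)
  then show ?case
    unfolding length_Cons prod.lessThan_Suc_shift by simp
qed simp

lemma sum_lists_length_Suc:
  fixes F :: "'z::finite list \<Rightarrow> real"
  shows "(\<Sum>xs | length xs = Suc m. F xs) = (\<Sum>y\<in>UNIV. \<Sum>ys | length ys = m. F (y # ys))"
proof -
  have lists: "{xs :: 'z list. length xs = Suc m} = (\<lambda>(ys, y). y # ys) ` ({ys. length ys = m} \<times> UNIV)"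
    using lists_length_Suc_eq[of "UNIV :: 'z set" m] by simp
  have "finite {ys :: 'z list. length ys = m}"
    using finite_lists_length_eq[of "UNIV :: 'z set" m] by simp
  then have "(\<Sum>(ys, y)\<in>{ys. length ys = m} \<times> UNIV. F (y # ys))
      = (\<Sum>y\<in>UNIV. \<Sum>ys | length ys = m. F (y # ys))"
    by (simp add: sum.cartesian_product[symmetric]) (rule sum.swap)
  then show ?thesis
    unfolding lists sum.reindex[OF inj_split_Cons] by (simp add: comp_def case_prod_unfold)
qed

lemma markov_exp_eq_sum_lists:
  "markov_exp P m h z = (\<Sum>ys | length ys = m. path_weight P z ys * h ys)"
proof (induction m arbitrary: h z)
  case (Suc m)
  have "markov_exp P (Suc m) h z
      = (\<Sum>y\<in>UNIV. \<Sum>ys | length ys = m. path_weight P z (y # ys) * h (y # ys))"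
    using Suc by (simp add: sum_distrib_left mult.assoc)
  also have "\<dots> = (\<Sum>ys | length ys = Suc m. path_weight P z ys * h ys)"
    by (rule sum_lists_length_Suc[symmetric])
  finally show ?case .
qed simp

definition path_of_list :: "'z list \<Rightarrow> nat \<Rightarrow> 'z" where
  "path_of_list xs i = (if i \<in> {1..length xs} then xs ! (i - 1) else undefined)"

lemma bij_betw_path_of_list:
  "bij_betw path_of_list {xs :: 'z list. length xs = N} (PiE {1..N} (\<lambda>_. UNIV))"
proof (rule bij_betw_byWitness[where f' = "\<lambda>x. map x [1..<Suc N]"])
  show "\<forall>xs\<in>{xs :: 'z list. length xs = N}. map (path_of_list xs) [1..<Suc N] = xs"
    by (simp add: list_eq_iff_nth_eq path_of_list_def del: upt_Suc)
  show "\<forall>x\<in>PiE {1..N} (\<lambda>_. UNIV). path_of_list (map x [1..<Suc N]) = (x :: nat \<Rightarrow> 'z)"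
  proof
    fix x :: "nat \<Rightarrow> 'z"
    assume x: "x \<in> PiE {1..N} (\<lambda>_. UNIV)"
    show "path_of_list (map x [1..<Suc N]) = x"
    proof
      fix i
      show "path_of_list (map x [1..<Suc N]) i = x i"
        using x by (cases "i \<in> {1..N}")
          (auto simp: path_of_list_def PiE_def extensional_def simp del: upt_Suc)
    qed
  qed
  show "path_of_list ` {xs :: 'z list. length xs = N} \<subseteq> PiE {1..N} (\<lambda>_. UNIV)"
    by (auto simp: path_of_list_def PiE_def extensional_def)
  show "(\<lambda>x. map x [1..<Suc N]) ` PiE {1..N} (\<lambda>_. UNIV) \<subseteq> {xs :: 'z list. length xs = N}"
    by auto
qed

lemma prod_path_of_list_Cons:
  assumes "length ys = m"
  shows "(\<Prod>i\<in>{1..<Suc m}. P (path_of_list (y # ys) i) (path_of_list (y # ys) (Suc i)))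
       = path_weight P y ys"
proof -
  have "(\<Prod>i\<in>{1..<Suc m}. P (path_of_list (y # ys) i) (path_of_list (y # ys) (Suc i)))
      = (\<Prod>i\<in>{0..<m}. P (path_of_list (y # ys) (Suc i)) (path_of_list (y # ys) (Suc (Suc i))))"
    by (simp only: One_nat_def prod.shift_bounds_Suc_ivl)
  also have "\<dots> = (\<Prod>i<m. P ((y # ys) ! i) ((y # ys) ! Suc i))"
    using assms by (intro prod.cong) (auto simp: path_of_list_def)
  finally show ?thesis
    using assms by (simp add: path_weight_eq_prod)
qed

lemma path_exp_eq_markov_exp:
  assumes stat: "stationary P mu" and N: "1 \<le> N"
  shows "path_exp mu P N H = (\<Sum>z\<in>UNIV. mu z * markov_exp P N (\<lambda>ys. H (path_of_list ys)) z)"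
proof -
  obtain m where N_Suc: "N = Suc m"
    using N by (cases N) auto
  have "path_exp mu P N H = (\<Sum>xs | length xs = N. mu (path_of_list xs 1)
      * (\<Prod>i\<in>{1..<N}. P (path_of_list xs i) (path_of_list xs (Suc i))) * H (path_of_list xs))"
    unfolding path_exp_def by (rule sum.reindex_bij_betw[OF bij_betw_path_of_list, symmetric])
  also have "\<dots> = (\<Sum>y\<in>UNIV. \<Sum>ys | length ys = m. mu y * (path_weight P y ys * H (path_of_list (y # ys))))"
    unfolding N_Suc sum_lists_length_Suc
  proof (intro sum.cong refl)
    fix y ys
    assume "ys \<in> {ys :: 'a list. length ys = m}"
    then have len: "length ys = m"
      by simp
    have first: "path_of_list (y # ys) 1 = y"
      by (simp add: path_of_list_def)
    show "mu (path_of_list (y # ys) 1)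
        * (\<Prod>i\<in>{1..<Suc m}. P (path_of_list (y # ys) i) (path_of_list (y # ys) (Suc i)))
        * H (path_of_list (y # ys)) = mu y * (path_weight P y ys * H (path_of_list (y # ys)))"
      unfolding prod_path_of_list_Cons[OF len] first by (simp only: mult.assoc)
  qed
  also have "\<dots> = (\<Sum>y\<in>UNIV. mu y * markov_exp P m (\<lambda>ys. H (path_of_list (y # ys))) y)"
    by (simp only: markov_exp_eq_sum_lists sum_distrib_left)
  also have "\<dots> = (\<Sum>z\<in>UNIV. mu z * markov_exp P N (\<lambda>ys. H (path_of_list ys)) z)"
    unfolding N_Suc markov_exp_stationary_Suc[OF stat] ..
  finally show ?thesis .
qed

lemma path_exp_const:
  assumes "stochastic_kernel P" "distribution mu" "stationary P mu" "1 \<le> N"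
  shows "path_exp mu P N (\<lambda>_. c) = c"
  using assms(2) unfolding path_exp_eq_markov_exp[OF assms(3,4)] markov_exp_const[OF assms(1)]
    distribution_def
  by (simp flip: sum_distrib_right)

lemma path_prob_union_bound:
  fixes K :: nat
  assumes kernel: "stochastic_kernel P" and dist: "distribution mu" and stat: "stationary P mu"
    and N: "1 \<le> N" and cover: "\<And>x. (\<And>k. k < K \<Longrightarrow> \<not> B k x) \<Longrightarrow> E x"
  shows "1 - (\<Sum>k<K. path_prob mu P N (B k)) \<le> path_prob mu P N E"
proof -
  define b where "b k x = (of_bool (B k x) :: real)" for k x
  have pointwise: "1 - (\<Sum>k<K. b k x) \<le> of_bool (E x)" for x
  proof (cases "\<exists>k<K. B k x")
    case True
    then obtain k where "k < K" "B k x"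
      by blast
    have "b k x \<le> (\<Sum>k<K. b k x)"
      using \<open>k < K\<close> by (intro member_le_sum) (simp_all add: b_def)
    moreover have "b k x = 1"
      using \<open>B k x\<close> by (simp add: b_def)
    ultimately show ?thesis
      by simp
  next
    case False
    then show ?thesis
      using cover by (simp add: b_def)
  qed
  have "path_exp mu P N (\<lambda>x. 1 - (\<Sum>k<K. b k x))
      = path_exp mu P N (\<lambda>_. 1) - (\<Sum>k<K. path_exp mu P N (b k))"
    unfolding path_exp_def
    by (simp add: right_diff_distrib sum_subtractf sum_distrib_left) (rule sum.swap)
  then have "1 - (\<Sum>k<K. path_prob mu P N (B k)) = path_exp mu P N (\<lambda>x. 1 - (\<Sum>k<K. b k x))"
    unfolding path_prob_eq_path_exp b_def[symmetric] by (simp add: path_exp_const[OF kernel dist stat N])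
  also have "\<dots> \<le> path_prob mu P N E"
    unfolding path_prob_eq_path_exp by (rule path_exp_mono[OF kernel dist pointwise])
  finally show ?thesis .
qed

lemma map_path_of_list_drop_eq_subsample:
  fixes K :: nat
  assumes k: "k < K" and nK: "n * K \<le> N" and len: "length ys = (K - Suc k) + N"
  shows "map (\<lambda>j. path_of_list (drop (K - Suc k) ys) (Suc k + j * K)) [0..<n] = subsample K n ys"
proof (rule nth_equalityI)
  fix j
  assume "j < length (map (\<lambda>j. path_of_list (drop (K - Suc k) ys) (Suc k + j * K)) [0..<n])"
  then have j: "j < n"
    by simp
  have "Suc k + j * K \<le> K + (n - 1) * K"
    using k j by (intro add_mono) auto
  also have "\<dots> = n * K"
    using j by (cases n) auto
  finally have i: "Suc k + j * K \<le> N"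
    using nK by simp
  then have "path_of_list (drop (K - Suc k) ys) (Suc k + j * K) = drop (K - Suc k) ys ! (k + j * K)"
    using len by (simp add: path_of_list_def)
  also have "\<dots> = ys ! (K - 1 + j * K)"
    using len k i by (simp add: algebra_simps)
  also have "\<dots> = subsample K n ys ! j"
    using nth_subsample[of K n ys j] k nK len j by simp
  finally show "map (\<lambda>j. path_of_list (drop (K - Suc k) ys) (Suc k + j * K)) [0..<n] ! j
      = subsample K n ys ! j"
    using j by simp
qed simp

text \<open>Prepending \<open>K - k - 1\<close> steps, which stationarity allows, aligns the subsequence
  \<open>x (k + 1), x (k + 1 + K), \<dots>\<close> with the block ends picked by \<^const>\<open>subsample\<close>.\<close>

lemma path_exp_subsample_le_iid_exp:
  fixes mu :: "'z::finite \<Rightarrow> real" and K :: nat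
  assumes kernel: "stochastic_kernel P" and dist: "distribution mu" and stat: "stationary P mu"
    and k: "k < K" and n: "1 \<le> n" and nK: "n * K \<le> N"
    and g: "\<And>us. 0 \<le> g us \<and> g us \<le> 1"
  shows "path_exp mu P N (\<lambda>x. g (map (\<lambda>j. x (Suc k + j * K)) [0..<n]))
         \<le> iid_exp mu n g + real (n - 1) * d_mix P mu K"
proof -
  define a where "a = K - Suc k"
  have K: "1 \<le> K"
    using k by simp
  then have "1 \<le> n * K"
    using n by simp
  then have N: "1 \<le> N"
    using nK by linarith
  have "path_exp mu P N (\<lambda>x. g (map (\<lambda>j. x (Suc k + j * K)) [0..<n]))
      = (\<Sum>z\<in>UNIV. mu z * markov_exp P (a + N)
           (\<lambda>ys. g (map (\<lambda>j. path_of_list (drop a ys) (Suc k + j * K)) [0..<n])) z)"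
    unfolding path_exp_eq_markov_exp[OF stat N] by (rule markov_exp_stationary_drop[OF stat, symmetric])
  also have "\<dots> = (\<Sum>z\<in>UNIV. mu z * markov_exp P (a + N) (\<lambda>ys. g (subsample K n ys)) z)"
    unfolding a_def
    by (intro sum.cong refl arg_cong[where f = "\<lambda>t. _ * t"] markov_exp_cong arg_cong[where f = g]
        map_path_of_list_drop_eq_subsample[OF k nK])
  also have "\<dots> = (\<Sum>z\<in>UNIV. mu z * markov_exp (kpow P K) n g z)"
    using markov_exp_subsample[OF kernel K] nK by simp
  also have "\<dots> \<le> iid_exp mu n g + real (n - 1) * d_mix P mu K"
    using stationary_markov_exp_le_iid_exp[OF stochastic_kernel_kpow[OF kernel, of K] dist
        stationary_kpow[OF stat, of K] tv_dist_le_d_mix g, where n = "n - 1"] n by simp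
  finally show ?thesis .
qed

section \<open>Concentration of sums of independent vectors\<close>

lemma cosh_le_exp_square_half:
  fixes x :: real
  assumes "0 \<le> x"
  shows "cosh x \<le> exp (x\<^sup>2 / 2)"
proof -
  have "-(2 * x) * (1 / 2) + ln (1 + (1 / 2) * (exp (2 * x) - 1)) \<le> (2 * x)\<^sup>2 / 8"
    using Hoeffdings_lemma_aux[of "2 * x" "1 / 2"] assms by simp
  then have "ln ((1 + exp (2 * x)) / 2) \<le> x + x\<^sup>2 / 2"
    by (simp add: power2_eq_square field_simps)
  then have "(1 + exp (2 * x)) / 2 \<le> exp (x + x\<^sup>2 / 2)"
    by (metis add_pos_pos exp_gt_zero exp_le_cancel_iff exp_ln half_gt_zero zero_less_one)
  then have "exp (-x) * ((1 + exp (2 * x)) / 2) \<le> exp (-x) * exp (x + x\<^sup>2 / 2)"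
    by (intro mult_left_mono) auto
  moreover have "exp (-x) * ((1 + exp (2 * x)) / 2) = cosh x"
    by (simp add: cosh_def field_simps mult_exp_exp)
  ultimately show ?thesis
    by (simp add: mult_exp_exp)
qed

lemma hoeffding_lemma_finite:
  fixes mu D :: "'z::finite \<Rightarrow> real"
  assumes dist: "distribution mu" and l: "0 \<le> l" and c: "0 \<le> c"
    and D_bound: "\<And>z. \<bar>D z\<bar> \<le> c" and D_mean: "(\<Sum>z\<in>UNIV. mu z * D z) = 0"
  shows "(\<Sum>z\<in>UNIV. mu z * exp (l * D z)) \<le> exp (l\<^sup>2 * c\<^sup>2 / 2)"
proof (cases "c = 0")
  case True
  then have "D z = 0" for z
    using D_bound[of z] by simp
  then show ?thesis
    using dist unfolding distribution_def by simp
next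
  case False
  then have c_pos: "0 < c"
    using c by simp
  have chord: "exp (l * D z) \<le> (c - D z) / (2 * c) * exp (l * (-c)) + (c + D z) / (2 * c) * exp (l * c)"
    for z
  proof -
    define t where "t = (c + D z) / (2 * c)"
    have t: "0 \<le> t" "t \<le> 1"
      using D_bound[of z] c_pos unfolding t_def by (auto simp: field_simps abs_le_iff)
    have "exp (l * ((1 - t) *\<^sub>R (-c) + t *\<^sub>R c)) \<le> (1 - t) * exp (l * (-c)) + t * exp (l * c)"
      by (rule convex_onD[OF convex_on_exp[OF l] t]) auto
    moreover have "(1 - t) *\<^sub>R (-c) + t *\<^sub>R c = D z" "1 - t = (c - D z) / (2 * c)"
      using c_pos unfolding t_def by (simp_all add: field_simps)
    ultimately show ?thesis
      unfolding t_def by simp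
  qed
  have "(\<Sum>z\<in>UNIV. mu z * exp (l * D z))
     \<le> (\<Sum>z\<in>UNIV. mu z * ((c - D z) / (2 * c) * exp (l * (-c)) + (c + D z) / (2 * c) * exp (l * c)))"
    using dist chord unfolding distribution_def by (intro sum_mono mult_left_mono) auto
  also have "\<dots> = ((\<Sum>z\<in>UNIV. mu z) * c - (\<Sum>z\<in>UNIV. mu z * D z)) / (2 * c) * exp (l * (-c))
      + ((\<Sum>z\<in>UNIV. mu z) * c + (\<Sum>z\<in>UNIV. mu z * D z)) / (2 * c) * exp (l * c)"
    by (simp add: sum.distrib sum_subtractf sum_distrib_left sum_distrib_right sum_divide_distrib
        algebra_simps diff_divide_distrib add_divide_distrib)
  also have "\<dots> = cosh (l * c)"
    using dist D_mean c_pos unfolding distribution_def by (simp add: cosh_def field_simps)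
  also have "\<dots> \<le> exp ((l * c)\<^sup>2 / 2)"
    using l c by (intro cosh_le_exp_square_half) simp
  finally show ?thesis
    by (simp add: power_mult_distrib)
qed

lemma iid_exp_norm_sum_shift_le:
  fixes Y :: "'z::finite \<Rightarrow> 'v::real_normed_vector"
  assumes dist: "distribution mu"
  shows "iid_exp mu n (\<lambda>us. norm (v + sum_list (map Y us)))
         \<le> iid_exp mu n (\<lambda>us. norm (v' + sum_list (map Y us))) + norm (v - v')"
proof -
  have "iid_exp mu n (\<lambda>us. norm (v + sum_list (map Y us)))
      \<le> iid_exp mu n (\<lambda>us. norm (v' + sum_list (map Y us)) + norm (v - v'))"
    using norm_triangle_ineq[of "v' + sum_list (map Y _)" "v - v'"]
    by (intro iid_exp_mono[OF dist]) (simp add: algebra_simps)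
  then show ?thesis
    by (simp add: iid_exp_add iid_exp_const[OF dist])
qed

lemma iid_exp_norm_sum_square_le:
  fixes Y :: "'z::finite \<Rightarrow> 'v::real_inner"
  assumes dist: "distribution mu" and Y_bound: "\<And>z. norm (Y z) \<le> c"
    and Y_mean: "(\<Sum>z\<in>UNIV. mu z *\<^sub>R Y z) = 0"
  shows "iid_exp mu n (\<lambda>us. (norm (v + sum_list (map Y us)))\<^sup>2) \<le> (norm v)\<^sup>2 + real n * c\<^sup>2"
proof (induction n arbitrary: v)
  case (Suc n)
  have mu: "\<And>z. 0 \<le> mu z" "(\<Sum>z\<in>UNIV. mu z) = 1"
    using dist unfolding distribution_def by auto
  have "iid_exp mu (Suc n) (\<lambda>us. (norm (v + sum_list (map Y us)))\<^sup>2)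
      = (\<Sum>z\<in>UNIV. mu z * iid_exp mu n (\<lambda>us. (norm ((v + Y z) + sum_list (map Y us)))\<^sup>2))"
    by (simp add: add.assoc)
  also have "\<dots> \<le> (\<Sum>z\<in>UNIV. mu z * ((norm (v + Y z))\<^sup>2 + real n * c\<^sup>2))"
    by (intro sum_mono mult_left_mono Suc.IH mu)
  also have "\<dots> = (\<Sum>z\<in>UNIV. mu z * ((norm v)\<^sup>2 + (norm (Y z))\<^sup>2 + real n * c\<^sup>2))
      + 2 * (v \<bullet> (\<Sum>z\<in>UNIV. mu z *\<^sub>R Y z))"
  proof -
    have "(norm (v + Y z))\<^sup>2 = (norm v)\<^sup>2 + (norm (Y z))\<^sup>2 + 2 * (v \<bullet> Y z)" for z
      using dot_norm[of v "Y z"] by simp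
    then show ?thesis
      by (simp add: inner_sum_right sum_distrib_left algebra_simps flip: sum.distrib)
  qed
  also have "\<dots> \<le> (\<Sum>z\<in>UNIV. mu z * ((norm v)\<^sup>2 + c\<^sup>2 + real n * c\<^sup>2))"
    using Y_bound Y_mean mu
    by (simp add: power_mono norm_ge_zero sum_mono mult_left_mono)
  also have "\<dots> = (\<Sum>z\<in>UNIV. mu z) * ((norm v)\<^sup>2 + c\<^sup>2 + real n * c\<^sup>2)"
    by (simp only: sum_distrib_right)
  also have "\<dots> = (norm v)\<^sup>2 + real (Suc n) * c\<^sup>2"
    using mu by (simp add: algebra_simps)
  finally show ?case .
qed simp

lemma iid_exp_norm_sum_le:
  fixes Y :: "'z::finite \<Rightarrow> 'v::real_inner"
  assumes dist: "distribution mu" and Y_bound: "\<And>z. norm (Y z) \<le> c"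
    and Y_mean: "(\<Sum>z\<in>UNIV. mu z *\<^sub>R Y z) = 0" and c: "0 < c" and n: "1 \<le> n"
  shows "iid_exp mu n (\<lambda>us. norm (sum_list (map Y us))) \<le> c * sqrt n"
proof -
  define T where "T = c * sqrt n"
  have T: "0 < T"
    using c n unfolding T_def by simp
  have am_gm: "s \<le> s\<^sup>2 / (2 * T) + T / 2" for s
  proof -
    have "2 * T * s \<le> s\<^sup>2 + T\<^sup>2"
      using zero_le_power2[of "s - T"] by (simp add: power2_eq_square algebra_simps)
    then show ?thesis
      using T by (simp add: field_simps power2_eq_square)
  qed
  have "iid_exp mu n (\<lambda>us. norm (sum_list (map Y us)))
      \<le> iid_exp mu n (\<lambda>us. (1 / (2 * T)) * (norm (0 + sum_list (map Y us)))\<^sup>2 + T / 2)"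
    using am_gm by (intro iid_exp_mono[OF dist]) simp
  also have "\<dots> = (1 / (2 * T)) * iid_exp mu n (\<lambda>us. (norm (0 + sum_list (map Y us)))\<^sup>2) + T / 2"
    by (simp only: iid_exp_add iid_exp_scale iid_exp_const[OF dist])
  also have "\<dots> \<le> (1 / (2 * T)) * (real n * c\<^sup>2) + T / 2"
    using iid_exp_norm_sum_square_le[OF dist Y_bound Y_mean, of n 0] T by (simp add: divide_right_mono)
  also have "\<dots> = T"
    using T n unfolding T_def by (simp add: field_simps power2_eq_square)
  finally show ?thesis
    unfolding T_def .
qed

text \<open>Bounded differences: revealing the first draw moves the conditional mean of the norm by
  at most \<open>c\<close>, so Hoeffding's lemma applies to every martingale increment.\<close>

lemma iid_exp_exp_deviation_le:
  fixes Y :: "'z::finite \<Rightarrow> 'v::real_normed_vector"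
  assumes dist: "distribution mu" and l: "0 \<le> l" and c: "0 \<le> c"
    and Y_diff: "\<And>z z'. norm (Y z - Y z') \<le> c"
  shows "iid_exp mu n (\<lambda>us. exp (l * (norm (v + sum_list (map Y us))
            - iid_exp mu n (\<lambda>us. norm (v + sum_list (map Y us))))))
         \<le> exp (real n * (l\<^sup>2 * c\<^sup>2 / 2))"
proof (induction n arbitrary: v)
  case (Suc n)
  have mu: "\<And>z. 0 \<le> mu z" "(\<Sum>z\<in>UNIV. mu z) = 1"
    using dist unfolding distribution_def by auto
  define A where "A m u = iid_exp mu m (\<lambda>us. norm (u + sum_list (map Y us)))" for m u
  define D where "D z = A n (v + Y z) - A (Suc n) v" for z
  have A_Suc: "A (Suc n) v = (\<Sum>z\<in>UNIV. mu z * A n (v + Y z))"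
    unfolding A_def by (simp add: add.assoc)
  have A_diff: "\<bar>A n (v + Y z) - A n (v + Y z')\<bar> \<le> c" for z z'
    using iid_exp_norm_sum_shift_le[OF dist, of n "v + Y z" Y "v + Y z'"]
      iid_exp_norm_sum_shift_le[OF dist, of n "v + Y z'" Y "v + Y z"]
      Y_diff[of z z'] norm_minus_commute[of "Y z" "Y z'"]
    unfolding A_def by simp
  have D_mean: "(\<Sum>z\<in>UNIV. mu z * D z) = 0"
    unfolding D_def by (simp add: right_diff_distrib sum_subtractf mu A_Suc flip: sum_distrib_right)
  have D_bound: "\<bar>D z\<bar> \<le> c" for z
  proof -
    have "D z = (\<Sum>z'\<in>UNIV. mu z' * (A n (v + Y z) - A n (v + Y z')))"
      unfolding D_def A_Suc by (simp add: right_diff_distrib sum_subtractf mu flip: sum_distrib_right)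
    also have "\<bar>\<dots>\<bar> \<le> (\<Sum>z'\<in>UNIV. mu z' * c)"
      by (rule order_trans[OF sum_abs sum_mono]) (simp add: abs_mult mu A_diff mult_left_mono)
    finally show ?thesis
      by (simp add: mu flip: sum_distrib_right)
  qed
  define \<kappa> where "\<kappa> = l\<^sup>2 * c\<^sup>2 / 2"
  have "iid_exp mu (Suc n) (\<lambda>us. exp (l * (norm (v + sum_list (map Y us)) - A (Suc n) v)))
      = (\<Sum>z\<in>UNIV. mu z * (exp (l * D z)
          * iid_exp mu n (\<lambda>us. exp (l * (norm ((v + Y z) + sum_list (map Y us)) - A n (v + Y z))))))"
    by (simp add: D_def add.assoc mult_exp_exp algebra_simps flip: iid_exp_scale)
  also have "\<dots> \<le> (\<Sum>z\<in>UNIV. mu z * (exp (l * D z) * exp (real n * \<kappa>)))"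
    using Suc.IH unfolding A_def \<kappa>_def by (intro sum_mono mult_left_mono mu) auto
  also have "\<dots> = (\<Sum>z\<in>UNIV. mu z * exp (l * D z)) * exp (real n * \<kappa>)"
    by (simp add: sum_distrib_right mult.assoc)
  also have "\<dots> \<le> exp \<kappa> * exp (real n * \<kappa>)"
    unfolding \<kappa>_def by (intro mult_right_mono hoeffding_lemma_finite[OF dist l c D_bound D_mean]) auto
  also have "\<dots> = exp (real (Suc n) * \<kappa>)"
    by (simp add: mult_exp_exp algebra_simps)
  finally show ?case
    unfolding A_def \<kappa>_def .
qed simp

lemma iid_exp_tail_le_of_mgf:
  assumes dist: "distribution mu" and s: "0 < s" and t: "0 \<le> t"
    and mgf: "\<And>l. 0 \<le> l \<Longrightarrow> iid_exp mu n (\<lambda>us. exp (l * X us)) \<le> exp (l\<^sup>2 * s / 2)"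
  shows "iid_exp mu n (\<lambda>us. of_bool (t < X us)) \<le> exp (- (t\<^sup>2 / (2 * s)))"
proof -
  define l where "l = t / s"
  have l: "0 \<le> l"
    using s t by (simp add: l_def)
  have "iid_exp mu n (\<lambda>us. of_bool (t < X us)) \<le> iid_exp mu n (\<lambda>us. exp (- (l * t)) * exp (l * X us))"
  proof (rule iid_exp_mono[OF dist])
    fix us :: "'a list"
    have "of_bool (t < X us) \<le> exp (l * (X us - t))"
      using l by (cases "t < X us") simp_all
    then show "of_bool (t < X us) \<le> exp (- (l * t)) * exp (l * X us)"
      by (simp add: mult_exp_exp algebra_simps)
  qed
  also have "\<dots> \<le> exp (- (l * t)) * exp (l\<^sup>2 * s / 2)"
    unfolding iid_exp_scale using mgf[OF l] by simp
  also have "\<dots> = exp (- (t\<^sup>2 / (2 * s)))"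
    using s by (simp add: l_def mult_exp_exp power2_eq_square field_simps)
  finally show ?thesis .
qed

lemma iid_exp_norm_sum_tail_le:
  fixes Y :: "'z::finite \<Rightarrow> 'v::real_inner"
  assumes dist: "distribution mu" and Y_bound: "\<And>z. norm (Y z) \<le> c"
    and Y_diff: "\<And>z z'. norm (Y z - Y z') \<le> c" and Y_mean: "(\<Sum>z\<in>UNIV. mu z *\<^sub>R Y z) = 0"
    and n: "1 \<le> n" and L: "0 \<le> L"
  shows "iid_exp mu n (\<lambda>us. of_bool (real n * (3 * c / sqrt n * (1 + sqrt L)) < norm (sum_list (map Y us))))
         \<le> exp (- L)"
proof (cases "c = 0")
  case True
  then have "sum_list (map Y us) = 0" for us
    using Y_bound by (induction us) auto
  then show ?thesis
    using True by (simp add: iid_exp_const[OF dist])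
next
  case False
  then have c: "0 < c"
    using order_trans[OF norm_ge_zero Y_bound] by (simp add: order_less_le)
  define A where "A = iid_exp mu n (\<lambda>us. norm (sum_list (map Y us)))"
  define t where "t = c * sqrt (2 * real n * L)"
  have "A + t \<le> real n * (3 * c / sqrt n * (1 + sqrt L))"
  proof -
    have "A \<le> c * sqrt n"
      unfolding A_def by (rule iid_exp_norm_sum_le[OF dist Y_bound Y_mean c n])
    moreover have "t \<le> 3 * c * sqrt n * sqrt L"
      using c L real_sqrt_le_mono[of 2 9] unfolding t_def
      by (simp add: real_sqrt_mult mult_right_mono mult_left_mono)
    ultimately have "A + t \<le> c * sqrt n + 3 * c * sqrt n * sqrt L"
      by linarith
    also have "\<dots> \<le> 3 * c * sqrt n * (1 + sqrt L)"
      using c n by (simp add: algebra_simps)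
    also have "\<dots> = (real n / sqrt n) * (3 * c * (1 + sqrt L))"
      using real_div_sqrt[of "real n"] by simp
    finally show ?thesis
      by simp
  qed
  then have "iid_exp mu n (\<lambda>us. of_bool (real n * (3 * c / sqrt n * (1 + sqrt L)) < norm (sum_list (map Y us))))
      \<le> iid_exp mu n (\<lambda>us. of_bool (t < norm (sum_list (map Y us)) - A))"
    by (intro iid_exp_mono[OF dist]) auto
  also have "\<dots> \<le> exp (- (t\<^sup>2 / (2 * (real n * c\<^sup>2))))"
  proof (rule iid_exp_tail_le_of_mgf[OF dist])
    show "0 < real n * c\<^sup>2" "0 \<le> t"
      using n c L by (simp_all add: t_def)
    show "iid_exp mu n (\<lambda>us. exp (l * (norm (sum_list (map Y us)) - A))) \<le> exp (l\<^sup>2 * (real n * c\<^sup>2) / 2)"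
      if "0 \<le> l" for l
      using iid_exp_exp_deviation_le[OF dist that _ Y_diff, of n 0] c unfolding A_def
      by (simp add: algebra_simps)
  qed
  also have "\<dots> = exp (- L)"
    using c n L by (simp add: t_def power_mult_distrib)
  finally show ?thesis .
qed

section \<open>The sample mean along the chain\<close>

lemma sum_interleaved_blocks:
  fixes y :: "nat \<Rightarrow> 'a::comm_monoid_add"
  assumes "n * K \<le> N"
  shows "(\<Sum>i=1..N. y i) = (\<Sum>k\<in>{0..<K}. \<Sum>j<n. y (Suc k + j * K)) + (\<Sum>i\<in>{n * K..<N}. y (Suc i))"
proof -
  have "(\<Sum>i=1..N. y i) = (\<Sum>i\<in>{0..<n * K}. y (Suc i)) + (\<Sum>i\<in>{n * K..<N}. y (Suc i))"
    using sum.atLeastLessThan_concat[of 0 "n * K" N "\<lambda>i. y (Suc i)"] assms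
    by (simp add: sum.atLeast1_atMost_eq atLeast0LessThan)
  also have "(\<Sum>i\<in>{0..<n * K}. y (Suc i)) = (\<Sum>j<n. \<Sum>i\<in>{j * K..<j * K + K}. y (Suc i))"
    using sum.nat_group[of "\<lambda>i. y (Suc i)" K n] by (simp add: atLeast0LessThan)
  also have "\<dots> = (\<Sum>j<n. \<Sum>k\<in>{0..<K}. y (Suc k + j * K))"
  proof (rule sum.cong[OF refl])
    fix j
    show "(\<Sum>i\<in>{j * K..<j * K + K}. y (Suc i)) = (\<Sum>k\<in>{0..<K}. y (Suc k + j * K))"
      using sum.shift_bounds_nat_ivl[of "\<lambda>i. y (Suc i)" 0 "j * K" K] by (simp add: add.commute)
  qed
  also have "\<dots> = (\<Sum>k\<in>{0..<K}. \<Sum>j<n. y (Suc k + j * K))"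
    by (rule sum.swap)
  finally show ?thesis .
qed

lemma norm_average_le_block_sums:
  fixes y :: "nat \<Rightarrow> 'v::real_normed_vector"
  assumes K: "1 \<le> K" "K \<le> N" and y: "\<And>i. norm (y i) \<le> c" and \<epsilon>: "0 \<le> \<epsilon>"
    and blocks: "\<And>k. k < K \<Longrightarrow> norm (\<Sum>j<N div K. y (Suc k + j * K)) \<le> real (N div K) * \<epsilon>"
  shows "norm ((1 / real N) *\<^sub>R (\<Sum>i=1..N. y i)) \<le> \<epsilon> + c * real K / real N"
proof -
  define n where "n = N div K"
  have nK: "n * K \<le> N" and rest: "N - n * K \<le> K"
    using K mod_less_divisor[of K N] div_mult_mod_eq[of N K] unfolding n_def by linarith+
  have c: "0 \<le> c"
    using order_trans[OF norm_ge_zero y] .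
  have "norm (\<Sum>i=1..N. y i)
      \<le> norm (\<Sum>k\<in>{0..<K}. \<Sum>j<n. y (Suc k + j * K)) + norm (\<Sum>i\<in>{n * K..<N}. y (Suc i))"
    unfolding sum_interleaved_blocks[OF nK] by (rule norm_triangle_ineq)
  also have "\<dots> \<le> (\<Sum>k\<in>{0..<K}. real n * \<epsilon>) + (\<Sum>i\<in>{n * K..<N}. c)"
  proof (rule add_mono)
    show "norm (\<Sum>k\<in>{0..<K}. \<Sum>j<n. y (Suc k + j * K)) \<le> (\<Sum>k\<in>{0..<K}. real n * \<epsilon>)"
      using blocks unfolding n_def by (intro order_trans[OF norm_sum sum_mono]) simp
    show "norm (\<Sum>i\<in>{n * K..<N}. y (Suc i)) \<le> (\<Sum>i\<in>{n * K..<N}. c)"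
      using y by (intro order_trans[OF norm_sum sum_mono])
  qed
  also have "\<dots> = real K * real n * \<epsilon> + real (N - n * K) * c"
    by simp
  also have "\<dots> \<le> real N * \<epsilon> + real K * c"
  proof (rule add_mono)
    have "real K * real n \<le> real N"
      using nK by (metis of_nat_le_iff of_nat_mult mult.commute)
    then show "real K * real n * \<epsilon> \<le> real N * \<epsilon>"
      using \<epsilon> by (rule mult_right_mono)
    show "real (N - n * K) * c \<le> real K * c"
      using rest c by (intro mult_right_mono) auto
  qed
  finally have sum_bound: "norm (\<Sum>i=1..N. y i) \<le> real N * \<epsilon> + real K * c" .
  have "0 < real N"
    using K by simp
  then show ?thesis
    using divide_right_mono[OF sum_bound, of "real N"] by (simp add: add_divide_distrib mult.commute)
qed

lemma path_prob_centred_sample_mean: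
  fixes Y :: "'z::finite \<Rightarrow> 'v::real_inner" and K N :: nat
  assumes kernel: "stochastic_kernel P" and dist: "distribution mu" and stat: "stationary P mu"
    and Y_bound: "\<And>z. norm (Y z) \<le> c" and Y_diff: "\<And>z z'. norm (Y z - Y z') \<le> c"
    and Y_mean: "(\<Sum>z\<in>UNIV. mu z *\<^sub>R Y z) = 0"
    and K: "1 \<le> K" "K \<le> N" and L: "0 \<le> L"
  shows "1 - real K * (exp (- L) + (real (N div K) - 1) * d_mix P mu K)
         \<le> path_prob mu P N (\<lambda>x. norm ((1 / real N) *\<^sub>R (\<Sum>i=1..N. Y (x i)))
              \<le> 3 * c / sqrt (real (N div K)) * (1 + sqrt L) + c * real K / real N)"
proof -
  define n where "n = N div K"
  define \<epsilon> where "\<epsilon> = 3 * c / sqrt n * (1 + sqrt L)"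
  define B where "B k x \<longleftrightarrow> real n * \<epsilon> < norm (\<Sum>j<n. Y (x (Suc k + j * K)))" for k x
  have n: "1 \<le> n" "n * K \<le> N"
    using K div_le_mono[of K N K] unfolding n_def by (simp_all add: div_times_less_eq_dividend)
  have \<epsilon>: "0 \<le> \<epsilon>"
    using order_trans[OF norm_ge_zero Y_bound] L unfolding \<epsilon>_def by simp
  have block: "path_prob mu P N (B k) \<le> exp (- L) + (real n - 1) * d_mix P mu K" if "k < K" for k
  proof -
    define g where "g us = (of_bool (real n * \<epsilon> < norm (sum_list (map Y us))) :: real)" for us
    have "path_prob mu P N (B k) = path_exp mu P N (\<lambda>x. g (map (\<lambda>j. x (Suc k + j * K)) [0..<n]))"
      unfolding path_prob_eq_path_exp B_def g_def
      by (simp add: sum_set_upt_conv_sum_list_nat[symmetric] atLeast0LessThan comp_def)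
    also have "\<dots> \<le> iid_exp mu n g + real (n - 1) * d_mix P mu K"
      by (rule path_exp_subsample_le_iid_exp[OF kernel dist stat that n]) (simp add: g_def)
    also have "iid_exp mu n g \<le> exp (- L)"
      unfolding g_def \<epsilon>_def by (rule iid_exp_norm_sum_tail_le[OF dist Y_bound Y_diff Y_mean n(1) L])
    finally show ?thesis
      using n by (simp add: of_nat_diff)
  qed
  have "1 - real K * (exp (- L) + (real n - 1) * d_mix P mu K) \<le> 1 - (\<Sum>k<K. path_prob mu P N (B k))"
    using sum_mono[of "{..<K}" "\<lambda>k. path_prob mu P N (B k)", OF block] by simp
  also have "\<dots> \<le> path_prob mu P N (\<lambda>x. norm ((1 / real N) *\<^sub>R (\<Sum>i=1..N. Y (x i))) \<le> \<epsilon> + c * real K / real N)"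
  proof (rule path_prob_union_bound[OF kernel dist stat])
    show "1 \<le> N"
      using K by simp
    show "norm ((1 / real N) *\<^sub>R (\<Sum>i=1..N. Y (x i))) \<le> \<epsilon> + c * real K / real N"
      if "\<And>k. k < K \<Longrightarrow> \<not> B k x" for x
      using that unfolding B_def n_def by (intro norm_average_le_block_sums[OF K Y_bound \<epsilon>]) (simp add: not_less)
  qed
  finally show ?thesis
    unfolding n_def \<epsilon>_def .
qed

lemma norm_sub_weighted_mean_le:
  fixes X :: "'z::finite \<Rightarrow> 'v::real_normed_vector"
  assumes dist: "distribution mu" and X_bound: "\<And>z. norm (X z) \<le> G"
  shows "norm (X z - (\<Sum>z\<in>UNIV. mu z *\<^sub>R X z)) \<le> 2 * G"
proof -
  have mu: "\<And>z. 0 \<le> mu z" "(\<Sum>z\<in>UNIV. mu z) = 1"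
    using dist unfolding distribution_def by auto
  have "norm (\<Sum>z\<in>UNIV. mu z *\<^sub>R X z) \<le> (\<Sum>z\<in>UNIV. mu z * G)"
    using mu X_bound by (intro order_trans[OF norm_sum sum_mono]) (simp add: mult_left_mono)
  also have "\<dots> = G"
    by (simp add: mu flip: sum_distrib_right)
  finally show ?thesis
    using norm_triangle_ineq4[of "X z" "\<Sum>z\<in>UNIV. mu z *\<^sub>R X z"] X_bound[of z] by linarith
qed

lemma weighted_mean_sub_weighted_mean:
  fixes X :: "'z::finite \<Rightarrow> 'v::real_vector"
  assumes "distribution mu"
  shows "(\<Sum>z\<in>UNIV. mu z *\<^sub>R (X z - (\<Sum>z\<in>UNIV. mu z *\<^sub>R X z))) = 0"
proof -
  have "(\<Sum>z\<in>UNIV. mu z *\<^sub>R (X z - m)) = (\<Sum>z\<in>UNIV. mu z *\<^sub>R X z) - (\<Sum>z\<in>UNIV. mu z) *\<^sub>R m"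
    for m :: 'v
    by (simp add: scaleR_right_diff_distrib sum_subtractf scaleR_sum_left)
  then show ?thesis
    using assms unfolding distribution_def by simp
qed

lemma path_prob_sample_mean:
  fixes X :: "'z::finite \<Rightarrow> 'v::real_inner" and K N :: nat
  assumes kernel: "stochastic_kernel P" and dist: "distribution mu" and stat: "stationary P mu"
    and X_bound: "\<And>z. norm (X z) \<le> G" and K: "1 \<le> K" "K \<le> N"
    and delta: "\<delta> > real K * (real (N div K) - 1) * d_mix P mu K"
  shows "path_prob mu P N
           (\<lambda>x. norm ((1 / real N) *\<^sub>R (\<Sum>i=1..N. X (x i)) - (\<Sum>z\<in>UNIV. mu z *\<^sub>R X z))
                 \<le> 6 * G / sqrt (real (N div K))
                     * (1 + sqrt (ln (real K / (\<delta> - real K * (real (N div K) - 1) * d_mix P mu K))))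
                   + 2 * G * real K / real N)
         \<ge> 1 - \<delta>"
proof (cases "1 \<le> \<delta>")
  case True
  then show ?thesis
    using path_prob_nonneg[OF kernel dist] by (simp add: order_trans[of _ 0])
next
  case False
  define n where "n = N div K"
  define \<delta>' where "\<delta>' = \<delta> - real K * (real n - 1) * d_mix P mu K"
  define L where "L = ln (real K / \<delta>')"
  define m where "m = (\<Sum>z\<in>UNIV. mu z *\<^sub>R X z)"
  have "1 \<le> n"
    using K div_le_mono[of K N K] unfolding n_def by simp
  then have "0 < \<delta>'" "\<delta>' \<le> \<delta>"
    using delta d_mix_nonneg[of P mu K] unfolding \<delta>'_def n_def by simp_all
  then have L: "0 \<le> L" and exp_L: "exp (- L) = \<delta>' / real K"
    using False K unfolding L_def by (simp_all add: exp_minus field_simps)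
  have Y_bound: "norm (X z - m) \<le> 2 * G" for z
    unfolding m_def by (rule norm_sub_weighted_mean_le[OF dist X_bound])
  have Y_diff: "norm ((X z - m) - (X z' - m)) \<le> 2 * G" for z z'
    using norm_triangle_ineq4[of "X z" "X z'"] X_bound[of z] X_bound[of z'] by simp
  have Y_mean: "(\<Sum>z\<in>UNIV. mu z *\<^sub>R (X z - m)) = 0"
    unfolding m_def by (rule weighted_mean_sub_weighted_mean[OF dist])
  have average: "(1 / real N) *\<^sub>R (\<Sum>i=1..N. X (x i) - m) = (1 / real N) *\<^sub>R (\<Sum>i=1..N. X (x i)) - m"
    for x :: "nat \<Rightarrow> 'z"
    using K by (simp add: sum_subtractf scaleR_right_diff_distrib sum_constant_scaleR)
  have "1 - \<delta> = 1 - real K * (exp (- L) + (real n - 1) * d_mix P mu K)"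
    using K unfolding exp_L \<delta>'_def by (simp add: field_simps)
  also have "\<dots> \<le> path_prob mu P N (\<lambda>x. norm ((1 / real N) *\<^sub>R (\<Sum>i=1..N. X (x i)) - m)
      \<le> 6 * G / sqrt (real n) * (1 + sqrt L) + 2 * G * real K / real N)"
    using path_prob_centred_sample_mean[OF kernel dist stat Y_bound Y_diff Y_mean K L]
    unfolding average n_def by simp
  finally show ?thesis
    unfolding m_def L_def \<delta>'_def n_def .
qed

lemma gradient_of_weighted_sum:
  fixes f :: "'v::real_inner \<Rightarrow> 'z::finite \<Rightarrow> real"
  assumes f_grad: "\<And>z. ((\<lambda>v. f v z) has_derivative (\<lambda>h. g z \<bullet> h)) (at w)"
    and F_grad: "(F has_derivative (\<lambda>h. g' \<bullet> h)) (at w)"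
    and F_eq: "\<And>u. F u = (\<Sum>z\<in>UNIV. mu z * f u z)"
  shows "g' = (\<Sum>z\<in>UNIV. mu z *\<^sub>R g z)"
proof -
  have "F = (\<lambda>u. \<Sum>z\<in>UNIV. mu z * f u z)"
    using F_eq by auto
  then have "(F has_derivative (\<lambda>h. \<Sum>z\<in>UNIV. mu z * (g z \<bullet> h))) (at w)"
    by (simp only: has_derivative_sum has_derivative_mult_right f_grad)
  then have "(\<lambda>h. g' \<bullet> h) = (\<lambda>h. (\<Sum>z\<in>UNIV. mu z *\<^sub>R g z) \<bullet> h)"
    unfolding inner_sum_left inner_scaleR_left by (rule has_derivative_unique[OF F_grad])
  then show ?thesis
    by (metis vector_eq_rdot)
qed

theorem lemmaA3:
  fixes P :: "'z::finite \<Rightarrow> 'z \<Rightarrow> real"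
    and mu :: "'z \<Rightarrow> real"
    and f :: "'v::euclidean_space \<Rightarrow> 'z \<Rightarrow> real"
    and gradf :: "'v \<Rightarrow> 'z \<Rightarrow> 'v"
    and F :: "'v \<Rightarrow> real"
    and gradF :: "'v"
    and KK :: "'v set"
    and G \<delta> :: real
    and N K :: nat
    and w :: 'v
  assumes kernel: "stochastic_kernel P"
    and dist: "distribution mu"
    and stat: "stationary P mu"
    and f_grad: "\<And>z u. ((\<lambda>v. f v z) has_derivative (\<lambda>h. gradf u z \<bullet> h)) (at u)"
    and F_def: "\<And>u. F u = (\<Sum>z\<in>UNIV. mu z * f u z)"
    and bound: "\<And>u z. u \<in> KK \<Longrightarrow> norm (gradf u z) \<le> G"
    and K_range: "1 \<le> K" "K \<le> N"
    and delta: "\<delta> > real K * (real (N div K) - 1) * d_mix P mu K"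
    and w_in: "w \<in> KK"
    and gradF_w: "(F has_derivative (\<lambda>h. gradF \<bullet> h)) (at w)"
  shows "path_prob mu P N
           (\<lambda>x. norm ((1 / real N) *\<^sub>R (\<Sum>i=1..N. gradf w (x i)) - gradF)
                 \<le> 6 * G / sqrt (real (N div K))
                     * (1 + sqrt (ln (real K / (\<delta> - real K * (real (N div K) - 1) * d_mix P mu K))))
                   + 2 * G * real K / real N)
         \<ge> 1 - \<delta>"
proof -
  have gradF: "gradF = (\<Sum>z\<in>UNIV. mu z *\<^sub>R gradf w z)"
    using f_grad gradF_w F_def by (rule gradient_of_weighted_sum)
  have "norm (gradf w z) \<le> G" for z
    using bound w_in by blast
  then show ?thesis
    unfolding gradF by (rule path_prob_sample_mean[OF kernel dist stat _ K_range delta])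
qed

end
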